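(* Let $\mathcal{T}$ be a finite tree with maximum degree $\Delta$, and $w:V(\mathcal{T})\to\mathbb{R}_{\ge0}$. Then $$\mathtt{cent}(\mathcal{T},w)\le\left(2-\frac{1}{2^{\Delta}}\right)\cdot\mathtt{OPT}(\mathcal{T},w).$$
   Context: For a subgraph $\mathcal{H}$ of $\mathcal{T}$, $w(\mathcal{H})=\sum_{x\in V(\mathcal{H})}w(x)$. A search tree on a tree $\mathcal{T}$ is a rooted tree $T$ with vertex set $V(\mathcal{T})$ defined recursively: its root is an arbitrary vertex $r$, and the children of $r$ are the roots of search trees built on the connected components of $\mathcal{T}-r$; a single-vertex tree has only itself as search tree. $\mathtt{cost}_w(T)=\sum_x w(x)\,\mathtt{depth}_T(x)$ with root depth $1$; $\mathtt{OPT}(\mathcal{T},w)$ is the minimum cost over all search trees on $\mathcal{T}$. A vertex $v$ is a centroid of $(\mathcal{T},w)$ if each component $\mathcal{H}$ of $\mathcal{T}-v$ has $w(\mathcal{H})\le w(\mathcal{T})/2$. A search tree $T$ is a centroid tree if each vertex $x$ is a centroid of $(\mathcal{T}[V(T_x)],w)$, $T_x$ being the subtree of $T$ rooted at $x$. $\mathtt{cent}(\mathcal{T},w)$ is the maximum cost of a centroid tree of $(\mathcal{T},w)$. *)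

theory Defs
  imports Complex_Main
begin

definition is_tree :: "'a set \<Rightarrow> ('a \<Rightarrow> 'a \<Rightarrow> bool) \<Rightarrow> bool" where
  "is_tree V E \<longleftrightarrow> finite V \<and> V \<noteq> {} \<and>
     (\<forall>u v. E u v \<longrightarrow> u \<in> V \<and> v \<in> V) \<and>
     (\<forall>u v. E u v \<longrightarrow> E v u) \<and> (\<forall>v. \<not> E v v) \<and>
     (\<forall>u\<in>V. \<forall>v\<in>V. (\<lambda>x y. E x y)\<^sup>*\<^sup>* u v) \<and>
     card {{u, v} | u v. E u v} = card V - 1"

definition max_degree :: "'a set \<Rightarrow> ('a \<Rightarrow> 'a \<Rightarrow> bool) \<Rightarrow> nat" where
  "max_degree V E = Max ((\<lambda>v. card {u \<in> V. E v u}) ` V)"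

definition reach :: "('a \<Rightarrow> 'a \<Rightarrow> bool) \<Rightarrow> 'a set \<Rightarrow> 'a \<Rightarrow> 'a \<Rightarrow> bool" where
  "reach E S = (\<lambda>x y. x \<in> S \<and> y \<in> S \<and> E x y)\<^sup>*\<^sup>*"

definition comps :: "('a \<Rightarrow> 'a \<Rightarrow> bool) \<Rightarrow> 'a set \<Rightarrow> 'a set set" where
  "comps E S = {{u \<in> S. reach E S v u} | v. v \<in> S}"

datatype 'a rtree = Node 'a "'a rtree list"

fun root :: "'a rtree \<Rightarrow> 'a" where
  "root (Node r ts) = r"

fun tset :: "'a rtree \<Rightarrow> 'a set" where
  "tset (Node r ts) = insert r (\<Union> (set (map tset ts)))"

fun subtrees :: "'a rtree \<Rightarrow> 'a rtree set" where
  "subtrees (Node r ts) = insert (Node r ts) (\<Union> (set (map subtrees ts)))"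

inductive search_tree :: "('a \<Rightarrow> 'a \<Rightarrow> bool) \<Rightarrow> 'a set \<Rightarrow> 'a rtree \<Rightarrow> bool" where
  "\<lbrakk> r \<in> S; distinct (map tset ts); set (map tset ts) = comps E (S - {r});
     \<forall>t\<in>set ts. search_tree E (tset t) t \<rbrakk> \<Longrightarrow> search_tree E S (Node r ts)"

text \<open>Cost with root at depth 1.\<close>
fun cost_at :: "('a \<Rightarrow> real) \<Rightarrow> nat \<Rightarrow> 'a rtree \<Rightarrow> real" where
  "cost_at w d (Node r ts) = w r * real d + sum_list (map (cost_at w (Suc d)) ts)"

definition cost :: "('a \<Rightarrow> real) \<Rightarrow> 'a rtree \<Rightarrow> real" where
  "cost w T = cost_at w 1 T"

definition OPT :: "'a set \<Rightarrow> ('a \<Rightarrow> 'a \<Rightarrow> bool) \<Rightarrow> ('a \<Rightarrow> real) \<Rightarrow> real" where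
  "OPT V E w = Min (cost w ` {T. search_tree E V T})"

definition is_centroid :: "('a \<Rightarrow> 'a \<Rightarrow> bool) \<Rightarrow> 'a set \<Rightarrow> ('a \<Rightarrow> real) \<Rightarrow> 'a \<Rightarrow> bool" where
  "is_centroid E S w v \<longleftrightarrow> v \<in> S \<and> (\<forall>C\<in>comps E (S - {v}). sum w C \<le> sum w S / 2)"

definition centroid_tree :: "'a set \<Rightarrow> ('a \<Rightarrow> 'a \<Rightarrow> bool) \<Rightarrow> ('a \<Rightarrow> real) \<Rightarrow> 'a rtree \<Rightarrow> bool" where
  "centroid_tree V E w T \<longleftrightarrow> search_tree E V T \<and>
     (\<forall>s\<in>subtrees T. is_centroid E (tset s) w (root s))"

definition cent :: "'a set \<Rightarrow> ('a \<Rightarrow> 'a \<Rightarrow> bool) \<Rightarrow> ('a \<Rightarrow> real) \<Rightarrow> real" where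
  "cent V E w = Max (cost w ` {T. centroid_tree V E w T})"

end

theory Submission
  imports Defs
begin

text \<open>Fix an optimal search tree \<open>T\<close> and let \<open>\<alpha>(e) = 2 - 1/2^e\<close>. On a connected set \<open>U\<close>,
  \<open>T\<close> induces a search tree of cost \<open>proj_cost U\<close>, with \<open>proj_cost V = OPT\<close>; splitting \<open>U\<close>
  into parts lowers the total projected cost by at least the weight of the parts avoiding the
  topmost vertex of \<open>U\<close> in \<open>T\<close>. By induction on \<open>card U\<close> we bound the centroid trees of \<open>U\<close>
  relative to a root \<open>r\<close>: the components of \<open>U - {r}\<close> in a set \<open>F\<close> are charged twice, and
  \<open>e\<close> bounds the number of the others. If the centroid \<open>c\<close> at the top differs from \<open>r\<close>, the
  component \<open>U'\<close> of \<open>U - {c}\<close> containing \<open>r\<close> has at most half the weight, and recursing into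
  \<open>U'\<close> cuts the component \<open>B0\<close> of \<open>U - {r}\<close> containing \<open>c\<close> into pieces. If \<open>B0 \<in> F\<close>, its
  double charge pays for the extra level; if the topmost vertex of \<open>B0\<close> lies in a piece, the
  projection saves enough and the other pieces join \<open>F\<close>; otherwise all pieces join \<open>F\<close>, \<open>e\<close>
  drops by one, and \<open>\<alpha>(e) = 1 + \<alpha>(e - 1) / 2\<close> absorbs the halved weight of \<open>U'\<close>. Taking
  \<open>r\<close> topmost in \<open>U\<close> and \<open>F = {}\<close> gives the bound \<open>\<alpha>(D) proj_cost U\<close>.\<close>

section \<open>Reachability and components\<close>

definition graph_connected :: "('a \<Rightarrow> 'a \<Rightarrow> bool) \<Rightarrow> 'a set \<Rightarrow> bool" where
  "graph_connected E U \<longleftrightarrow> (\<forall>x\<in>U. \<forall>y\<in>U. reach E U x y)"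

lemma reach_refl [simp]: "reach E S x x"
  unfolding reach_def by auto

lemma reach_step: "x \<in> S \<Longrightarrow> y \<in> S \<Longrightarrow> E x y \<Longrightarrow> reach E S x y"
  unfolding reach_def by auto

lemma reach_trans: "reach E S x y \<Longrightarrow> reach E S y z \<Longrightarrow> reach E S x z"
  unfolding reach_def by auto

lemma reach_mono: "S \<subseteq> S' \<Longrightarrow> reach E S x y \<Longrightarrow> reach E S' x y"
  unfolding reach_def by (erule rtranclp_mono[THEN predicate2D, rotated]) auto

lemma reach_induct [consumes 1, case_names base step]:
  assumes "reach E S x y" "P x"
    "\<And>y z. reach E S x y \<Longrightarrow> y \<in> S \<Longrightarrow> z \<in> S \<Longrightarrow> E y z \<Longrightarrow> P y \<Longrightarrow> P z"
  shows "P y"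
  using assms(1) unfolding reach_def
proof (induction rule: rtranclp_induct)
  case base then show ?case using assms(2) by simp
next
  case (step y z) then show ?case using assms(3)[of y z] unfolding reach_def by blast
qed

lemma reach_mono_edges:
  assumes "reach E S x y" "\<And>z z'. z \<in> S \<Longrightarrow> z' \<in> S \<Longrightarrow> E z z' \<Longrightarrow> E' z z'" "S \<subseteq> S'"
  shows "reach E' S' x y"
  using assms(1)
proof (induction rule: reach_induct)
  case (step y z)
  then have "reach E' S' y z" using reach_step[of y S' z E'] assms(2,3) by blast
  then show ?case using step.IH reach_trans by metis
qed simp

lemma reach_closed:
  assumes "reach E S x y" "x \<in> C" "\<forall>a\<in>C. \<forall>b\<in>S. E a b \<longrightarrow> b \<in> C"
  shows "y \<in> C"
  using assms(1)
proof (induction rule: reach_induct)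
  case (step y z) then show ?case using assms(3) by blast
qed (use assms(2) in simp)

lemma reach_within:
  assumes "reach E S x y" "x \<in> C" "\<forall>a\<in>C. \<forall>b\<in>S. E a b \<longrightarrow> b \<in> C" "C \<subseteq> S"
  shows "reach E C x y"
  using assms(1)
proof (induction rule: reach_induct)
  case (step z z')
  have "z \<in> C" using reach_closed[OF step(1) assms(2,3)] .
  then have "reach E C z z'" using step assms(3) reach_step[of z C z' E] by blast
  then show ?case using step.IH reach_trans by metis
qed simp

lemma sum_Union_pairwise_disjnt:
  assumes "pairwise disjnt C" "\<And>A. A \<in> C \<Longrightarrow> finite A"
  shows "sum f (\<Union>C) = (\<Sum>A\<in>C. sum f A)"
  using sum.Union_disjoint[of C f] assms unfolding pairwise_def disjnt_def by simp

locale sym_graph =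
  fixes E :: "'a \<Rightarrow> 'a \<Rightarrow> bool"
  assumes sym: "E u v \<Longrightarrow> E v u"
begin

lemma reach_sym: "reach E S x y \<Longrightarrow> reach E S y x"
proof (induction rule: reach_induct)
  case (step y z)
  then have "reach E S z y" using reach_step[of z S y E] sym by blast
  then show ?case using step.IH reach_trans by metis
qed simp

lemma comps_iff:
  "C \<in> comps E S \<longleftrightarrow>
     C \<subseteq> S \<and> C \<noteq> {} \<and> graph_connected E C \<and> (\<forall>a\<in>C. \<forall>b\<in>S. E a b \<longrightarrow> b \<in> C)"
proof
  assume "C \<in> comps E S"
  then obtain v where v: "v \<in> S" and C: "C = {u \<in> S. reach E S v u}"
    unfolding comps_def by auto
  have closed: "\<forall>a\<in>C. \<forall>b\<in>S. E a b \<longrightarrow> b \<in> C"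
  proof (intro ballI impI)
    fix a b assume "a \<in> C" "b \<in> S" "E a b"
    then have "reach E S v b" using C reach_step[of a S b E] reach_trans[of E S v a b] by simp
    then show "b \<in> C" using C \<open>b \<in> S\<close> by simp
  qed
  have vC: "v \<in> C" and CS: "C \<subseteq> S" using v C by auto
  have reach_v: "reach E C v u" if "u \<in> C" for u
    using reach_within[OF _ vC closed CS] that C by simp
  have "graph_connected E C"
    unfolding graph_connected_def
  proof (intro ballI)
    fix x y assume "x \<in> C" "y \<in> C"
    then show "reach E C x y" using reach_trans[OF reach_sym[OF reach_v] reach_v] by simp
  qed
  then show "C \<subseteq> S \<and> C \<noteq> {} \<and> graph_connected E C \<and> (\<forall>a\<in>C. \<forall>b\<in>S. E a b \<longrightarrow> b \<in> C)"
    using closed vC CS by blast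
next
  assume H: "C \<subseteq> S \<and> C \<noteq> {} \<and> graph_connected E C \<and> (\<forall>a\<in>C. \<forall>b\<in>S. E a b \<longrightarrow> b \<in> C)"
  then obtain v where v: "v \<in> C" by blast
  have "C = {u \<in> S. reach E S v u}"
  proof (intro equalityI subsetI)
    fix u assume "u \<in> C"
    then have "reach E C v u" using H v unfolding graph_connected_def by blast
    then show "u \<in> {u \<in> S. reach E S v u}" using H \<open>u \<in> C\<close> reach_mono[of C S E v u] by blast
  next
    fix u assume "u \<in> {u \<in> S. reach E S v u}"
    then show "u \<in> C" using reach_closed[of E S v u C] H v by blast
  qed
  then show "C \<in> comps E S" unfolding comps_def using H v by blast
qed

lemma comps_subset: "C \<in> comps E S \<Longrightarrow> C \<subseteq> S"
  and comps_nonempty: "C \<in> comps E S \<Longrightarrow> C \<noteq> {}"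
  and comps_connected: "C \<in> comps E S \<Longrightarrow> graph_connected E C"
  and comps_closed: "C \<in> comps E S \<Longrightarrow> a \<in> C \<Longrightarrow> b \<in> S \<Longrightarrow> E a b \<Longrightarrow> b \<in> C"
  by (simp_all add: comps_iff)

lemma comps_cover: "x \<in> S \<Longrightarrow> \<exists>C\<in>comps E S. x \<in> C"
  by (rule bexI[of _ "{u \<in> S. reach E S x u}"]) (auto simp: comps_def)

lemma Union_comps: "\<Union>(comps E S) = S"
  using comps_subset comps_cover by blast

lemma connected_subset_comp:
  assumes "graph_connected E U" "U \<subseteq> S" "x \<in> U" "C \<in> comps E S" "x \<in> C"
  shows "U \<subseteq> C"
proof
  fix y assume "y \<in> U"
  then have "reach E S x y"
    using assms(1,3) reach_mono[OF assms(2)] unfolding graph_connected_def by blast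
  then show "y \<in> C" using reach_closed[of E S x y C] comps_closed[OF assms(4)] assms(5) by blast
qed

lemma comps_eq: "C1 \<in> comps E S \<Longrightarrow> C2 \<in> comps E S \<Longrightarrow> x \<in> C1 \<Longrightarrow> x \<in> C2 \<Longrightarrow> C1 = C2"
  using connected_subset_comp[of C1 S x C2] connected_subset_comp[of C2 S x C1]
  by (simp add: comps_connected comps_subset subset_antisym)

lemma comps_disjoint: "C1 \<in> comps E S \<Longrightarrow> C2 \<in> comps E S \<Longrightarrow> C1 \<noteq> C2 \<Longrightarrow> C1 \<inter> C2 = {}"
  using comps_eq by blast

lemma comps_pairwise_disjnt: "pairwise disjnt (comps E S)"
  unfolding pairwise_def disjnt_def using comps_disjoint by blast

lemma sum_comps: "finite S \<Longrightarrow> sum f S = (\<Sum>C\<in>comps E S. sum f C)"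
  using sum_Union_pairwise_disjnt[OF comps_pairwise_disjnt, of S f] Union_comps[of S]
    comps_subset finite_subset by metis

lemma comps_restrict: "C \<in> comps E S \<Longrightarrow> C \<subseteq> S' \<Longrightarrow> S' \<subseteq> S \<Longrightarrow> C \<in> comps E S'"
  unfolding comps_iff by blast

lemma connected_in_comp:
  "graph_connected E U \<Longrightarrow> U \<subseteq> S \<Longrightarrow> U \<noteq> {} \<Longrightarrow> \<exists>C\<in>comps E S. U \<subseteq> C"
proof -
  assume a: "graph_connected E U" "U \<subseteq> S" "U \<noteq> {}"
  then obtain x where "x \<in> U" by blast
  then obtain C where "C \<in> comps E S" "x \<in> C" using comps_cover a(2) by blast
  then show ?thesis using connected_subset_comp[OF a(1,2) \<open>x \<in> U\<close>] by blast
qed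

lemma finite_comps: "finite S \<Longrightarrow> finite (comps E S)"
  by (rule finite_subset[of _ "Pow S"]) (use comps_subset in auto)

lemma comps_neighbour:
  assumes "graph_connected E U" "x \<in> U" "D \<in> comps E (U - {x})"
  shows "\<exists>u\<in>D. E x u"
proof -
  obtain d where d: "d \<in> D" using comps_nonempty assms by blast
  then have "reach E U d x" using assms comps_subset unfolding graph_connected_def by blast
  have "z \<in> D \<or> (\<exists>u\<in>D. E u x)" if "reach E U d z" for z
    using that
  proof (induction rule: reach_induct)
    case (step z z')
    then show ?case using comps_closed[OF assms(3), of z z'] by (cases "z' = x") auto
  qed (use d in simp)
  from this[OF \<open>reach E U d x\<close>] have "x \<in> D \<or> (\<exists>u\<in>D. E u x)" .
  then show ?thesis using comps_subset[OF assms(3)] sym by blast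
qed

end

section \<open>Edge counts and trees\<close>

definition edge_set :: "('a \<Rightarrow> 'a \<Rightarrow> bool) \<Rightarrow> 'a set \<Rightarrow> 'a set set" where
  "edge_set E S = {{u, v} | u v. u \<in> S \<and> v \<in> S \<and> E u v}"

lemma edge_set_subset: "e \<in> edge_set E S \<Longrightarrow> e \<subseteq> S"
  unfolding edge_set_def by blast

lemma finite_edge_set: "finite S \<Longrightarrow> finite (edge_set E S)"
  by (rule finite_subset[of _ "Pow S"]) (use edge_set_subset in auto)

context sym_graph
begin

lemma card_edge_set_comps:
  assumes "finite S"
  shows "card (\<Union>C\<in>comps E S. edge_set E C) = (\<Sum>C\<in>comps E S. card (edge_set E C))"
proof (rule card_UN_disjoint)
  show "finite (comps E S)" using finite_comps[OF assms] .
  show "\<forall>C\<in>comps E S. finite (edge_set E C)"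
  proof
    fix C assume "C \<in> comps E S"
    then have "finite C" using comps_subset assms finite_subset by blast
    then show "finite (edge_set E C)" by (rule finite_edge_set)
  qed
  show "\<forall>C1\<in>comps E S. \<forall>C2\<in>comps E S. C1 \<noteq> C2 \<longrightarrow> edge_set E C1 \<inter> edge_set E C2 = {}"
  proof (intro ballI impI)
    fix C1 C2 assume "C1 \<in> comps E S" "C2 \<in> comps E S" "C1 \<noteq> C2"
    then have "C1 \<inter> C2 = {}" by (rule comps_disjoint)
    moreover have "e \<noteq> {}" if "e \<in> edge_set E C1" for e
      using that unfolding edge_set_def by blast
    ultimately show "edge_set E C1 \<inter> edge_set E C2 = {}"
      using edge_set_subset[of _ E C1] edge_set_subset[of _ E C2] by blast
  qed
qed

text \<open>Deleting a vertex \<open>v\<close>: each component of the rest contributes its own edges and at least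
  one edge to \<open>v\<close>.\<close>

lemma card_comps_plus_edges_le:
  assumes fin: "finite S" and conn: "graph_connected E S" and v: "v \<in> S"
  shows "card (comps E (S - {v})) + (\<Sum>C\<in>comps E (S - {v}). card (edge_set E C))
    \<le> card (edge_set E S)"
proof -
  let ?Cs = "comps E (S - {v})"
  obtain f where f: "\<forall>C\<in>?Cs. f C \<in> C \<and> E v (f C)"
    using comps_neighbour[OF conn v] by metis
  define g where "g C = {v, f C}" for C
  have fS: "f C \<in> S - {v}" if "C \<in> ?Cs" for C using f comps_subset that by blast
  have "inj_on g ?Cs"
  proof (rule inj_onI)
    fix C1 C2 assume C: "C1 \<in> ?Cs" "C2 \<in> ?Cs" "g C1 = g C2"
    then have "f C1 = f C2" using fS unfolding g_def by (metis Diff_iff doubleton_eq_iff singletonI)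
    then show "C1 = C2" using comps_eq[OF C(1,2)] f C(1,2) by metis
  qed
  then have "card (g ` ?Cs) = card ?Cs" by (rule card_image)
  let ?M = "\<Union>C\<in>?Cs. edge_set E C"
  have "g ` ?Cs \<subseteq> edge_set E S"
    using fS f v unfolding g_def edge_set_def by blast
  moreover have "?M \<subseteq> edge_set E S"
    using comps_subset unfolding edge_set_def by blast
  moreover have "g ` ?Cs \<inter> ?M = {}"
    using comps_subset edge_set_subset unfolding g_def by blast
  moreover have "finite ?M"
    using finite_edge_set[OF fin, of E] calculation(2) finite_subset by blast
  ultimately have "card (g ` ?Cs) + card ?M \<le> card (edge_set E S)"
    using finite_comps[of "S - {v}"] fin card_Un_disjoint[of "g ` ?Cs" ?M]
      card_mono[OF finite_edge_set[OF fin], of "g ` ?Cs \<union> ?M"] by simp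
  then show ?thesis
    using \<open>card (g ` ?Cs) = card ?Cs\<close> card_edge_set_comps[of "S - {v}"] fin by simp
qed

lemma connected_card_edge_set:
  assumes "finite S" "graph_connected E S"
  shows "card S - 1 \<le> card (edge_set E S)"
  using assms
proof (induction "card S" arbitrary: S rule: less_induct)
  case less
  show ?case
  proof (cases "S = {}")
    case False
    then obtain v where v: "v \<in> S" by blast
    let ?Cs = "comps E (S - {v})"
    have finC: "finite C" if "C \<in> ?Cs" for C
      using comps_subset[OF that] less.prems(1) finite_subset by blast
    have IH: "card C - 1 \<le> card (edge_set E C)" if C: "C \<in> ?Cs" for C
    proof (rule less.hyps)
      show "card C < card S"
        using psubset_card_mono[OF less.prems(1)] comps_subset[OF C] v by blast
    qed (use finC[OF C] comps_connected[OF C] in auto)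
    have "card S - 1 = card (\<Union>?Cs)" using Union_comps v less.prems(1) by simp
    also have "\<dots> = (\<Sum>C\<in>?Cs. card C)"
      using card_Union_disjoint[OF comps_pairwise_disjnt] finC by blast
    also have "\<dots> = (\<Sum>C\<in>?Cs. (card C - 1) + 1)"
      using comps_nonempty finC by (intro sum.cong) (auto simp: Suc_leI card_gt_0_iff)
    also have "\<dots> = (\<Sum>C\<in>?Cs. card C - 1) + card ?Cs"
      by (simp only: sum.distrib card_eq_sum)
    also have "\<dots> \<le> (\<Sum>C\<in>?Cs. card (edge_set E C)) + card ?Cs"
      using IH by (simp add: sum_mono)
    also have "\<dots> \<le> card (edge_set E S)"
      using card_comps_plus_edges_le[OF less.prems v] by simp
    finally show ?thesis .
  qed simp
qed

end

locale tree =
  fixes V :: "'a set" and E :: "'a \<Rightarrow> 'a \<Rightarrow> bool"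
  assumes is_tree: "is_tree V E"
begin

lemma finite_V: "finite V"
  and edge_in_V: "E u v \<Longrightarrow> u \<in> V \<and> v \<in> V"
  and irrefl: "\<not> E v v"
  using is_tree unfolding is_tree_def by blast+

sublocale sym_graph E
  using is_tree unfolding is_tree_def by unfold_locales blast

lemma connected_V: "graph_connected E V"
  unfolding graph_connected_def reach_def
proof (intro ballI)
  fix u v assume "u \<in> V" "v \<in> V"
  then have "E\<^sup>*\<^sup>* u v" using is_tree unfolding is_tree_def by blast
  then show "(\<lambda>x y. x \<in> V \<and> y \<in> V \<and> E x y)\<^sup>*\<^sup>* u v"
    by (rule rtranclp_mono[THEN predicate2D, rotated]) (use edge_in_V in auto)
qed

lemma card_edge_set_V: "card (edge_set E V) = card V - 1"
proof -
  have "edge_set E V = {{u, v} | u v. E u v}" unfolding edge_set_def using edge_in_V by blast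
  then show ?thesis using is_tree unfolding is_tree_def by simp
qed

text \<open>Without the edge \<open>ab\<close> only \<open>card V - 2\<close> edges would remain, too few to connect \<open>V\<close>.\<close>

lemma edge_is_bridge:
  assumes ab: "E a b"
  shows "\<not> reach (\<lambda>x y. E x y \<and> {x, y} \<noteq> {a, b}) V a b"
proof
  define E' where "E' = (\<lambda>x y. E x y \<and> {x, y} \<noteq> {a, b})"
  assume "reach (\<lambda>x y. E x y \<and> {x, y} \<noteq> {a, b}) V a b"
  then have rab: "reach E' V a b" unfolding E'_def .
  interpret del: sym_graph E'
    by unfold_locales (auto simp: E'_def insert_commute dest: sym)
  have rba: "reach E' V b a" using del.reach_sym[OF rab] .
  have "reach E' V x y" if "x \<in> V" "y \<in> V" for x y
  proof -
    have "reach E V x y" using connected_V that unfolding graph_connected_def by blast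
    then show ?thesis
    proof (induction rule: reach_induct)
      case (step z z')
      have "reach E' V z z'"
      proof (cases "{z, z'} = {a, b}")
        case True
        then show ?thesis using rab rba by (auto simp: doubleton_eq_iff)
      next
        case False
        then show ?thesis using step(2-4) reach_step[of z V z' E'] unfolding E'_def by blast
      qed
      then show ?case using step.IH reach_trans by metis
    qed simp
  qed
  then have "card V - 1 \<le> card (edge_set E' V)"
    using del.connected_card_edge_set[OF finite_V] unfolding graph_connected_def by blast
  moreover have "edge_set E' V = edge_set E V - {{a, b}}"
    unfolding edge_set_def E'_def by blast
  moreover have "{a, b} \<in> edge_set E V" unfolding edge_set_def using edge_in_V[OF ab] ab by blast
  moreover have "2 \<le> card V"
  proof -
    have "a \<noteq> b" using ab irrefl by blast
    then have "card {a, b} = 2" by simp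
    then show ?thesis using card_mono[OF finite_V, of "{a, b}"] edge_in_V[OF ab] by simp
  qed
  ultimately show False
    using card_edge_set_V finite_edge_set[OF finite_V] by (simp add: card_Diff_singleton)
qed

lemma comp_across_edge_disjoint:
  assumes UV: "U \<subseteq> V" and v: "v \<in> U" and Dc: "Dc \<in> comps E (U - {v})"
    and u: "u \<in> Dc" "E v u" and K: "K \<in> comps E (U - {u})" "v \<in> K"
  shows "K \<inter> Dc = {}"
proof (rule ccontr)
  assume "K \<inter> Dc \<noteq> {}"
  then obtain y where y: "y \<in> K" "y \<in> Dc" by blast
  define E' where "E' = (\<lambda>x y. E x y \<and> {x, y} \<noteq> {v, u})"
  have "reach E K v y"
    using comps_connected[OF K(1)] K(2) y(1) unfolding graph_connected_def by blast
  then have vy: "reach E' V v y"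
    by (rule reach_mono_edges)
      (use comps_subset[OF K(1)] UV in \<open>auto simp: E'_def doubleton_eq_iff\<close>)
  have "reach E Dc y u"
    using comps_connected[OF Dc] y(2) u(1) unfolding graph_connected_def by blast
  then have yu: "reach E' V y u"
    by (rule reach_mono_edges)
      (use comps_subset[OF Dc] UV in \<open>auto simp: E'_def doubleton_eq_iff\<close>)
  show False using reach_trans[OF vy yu] edge_is_bridge[OF u(2)] unfolding E'_def by blast
qed

end

section \<open>Search trees and their cost\<close>

text \<open>The ancestors of \<open>x\<close> include \<open>x\<close> itself, so \<open>card (ancestors T x)\<close> is the depth of \<open>x\<close>.\<close>

fun ancestors :: "'a rtree \<Rightarrow> 'a \<Rightarrow> 'a set" where
  "ancestors (Node r ts) x =
     (if x \<in> tset (Node r ts) then insert r (\<Union> (set (map (\<lambda>t. ancestors t x) ts))) else {})"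

declare ancestors.simps[simp del]

lemma finite_tset: "finite (tset T)"
  by (induction T) auto

lemma ancestors_subset: "ancestors T x \<subseteq> tset T"
proof (induction T)
  case (Node r ts)
  show ?case
  proof
    fix y assume y: "y \<in> ancestors (Node r ts) x"
    show "y \<in> tset (Node r ts)"
    proof (cases "y = r")
      case True then show ?thesis by simp
    next
      case False
      then obtain t where "t \<in> set ts" "y \<in> ancestors t x"
        using y by (auto simp: ancestors.simps split: if_splits)
      then show ?thesis using Node by auto
    qed
  qed
qed

lemma finite_ancestors: "finite (ancestors T x)"
  using finite_subset[OF ancestors_subset finite_tset] .

lemma ancestors_notin: "x \<notin> tset T \<Longrightarrow> ancestors T x = {}"
  by (cases T) (simp add: ancestors.simps)

lemma root_in_ancestors: "x \<in> tset T \<Longrightarrow> root T \<in> ancestors T x"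
  by (cases T) (simp add: ancestors.simps)

lemma self_in_ancestors: "x \<in> tset T \<Longrightarrow> x \<in> ancestors T x"
proof (induction T)
  case (Node r ts)
  show ?case
  proof (cases "x = r")
    case True then show ?thesis by (simp add: ancestors.simps)
  next
    case False
    then obtain t where "t \<in> set ts" "x \<in> tset t" using Node.prems by auto
    then have "x \<in> ancestors t x" using Node.IH by blast
    then show ?thesis using \<open>t \<in> set ts\<close> Node.prems by (auto simp: ancestors.simps)
  qed
qed

lemma search_tree_NodeD:
  assumes "search_tree E S (Node r ts)"
  shows "r \<in> S" "distinct (map tset ts)" "set (map tset ts) = comps E (S - {r})"
    "\<And>t. t \<in> set ts \<Longrightarrow> search_tree E (tset t) t"
  using assms by (cases rule: search_tree.cases; simp)+

context sym_graph
begin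

lemma search_tree_induct[consumes 1, case_names node]:
  assumes "search_tree E S T"
    "\<And>r S ts. r \<in> S \<Longrightarrow> distinct (map tset ts) \<Longrightarrow> set (map tset ts) = comps E (S - {r}) \<Longrightarrow>
      (\<And>t. t \<in> set ts \<Longrightarrow> search_tree E (tset t) t) \<Longrightarrow> (\<And>t. t \<in> set ts \<Longrightarrow> P (tset t) t) \<Longrightarrow>
      P S (Node r ts)"
  shows "P S T"
  using assms(1)
proof (induction T arbitrary: S rule: rtree.induct)
  case (Node r ts)
  show ?case
  proof (rule assms(2))
    show "r \<in> S" "distinct (map tset ts)" "set (map tset ts) = comps E (S - {r})"
      using search_tree_NodeD[OF Node.prems] by auto
    show "\<And>t. t \<in> set ts \<Longrightarrow> search_tree E (tset t) t" using search_tree_NodeD(4)[OF Node.prems] .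
    then show "\<And>t. t \<in> set ts \<Longrightarrow> P (tset t) t" using Node.IH by blast
  qed
qed

lemma search_tree_tset: "search_tree E S T \<Longrightarrow> tset T = S"
proof (induction rule: search_tree_induct)
  case (node r S ts)
  have "\<Union> (set (map tset ts)) = S - {r}" using node(3) Union_comps[of "S - {r}"] by simp
  then show ?case using node(1,5) by auto
qed

lemma search_tree_child:
  assumes "search_tree E S (Node r ts)" "t \<in> set ts"
  shows "tset t \<in> comps E (S - {r})" "tset t \<subseteq> S - {r}"
proof -
  show "tset t \<in> comps E (S - {r})" using search_tree_NodeD(3)[OF assms(1)] assms(2) by auto
  then show "tset t \<subseteq> S - {r}" using comps_subset by blast
qed

lemma search_tree_children_disjoint:
  assumes "search_tree E S (Node r ts)" "t1 \<in> set ts" "t2 \<in> set ts" "t1 \<noteq> t2"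
  shows "tset t1 \<inter> tset t2 = {}"
proof -
  have "inj_on tset (set ts)" using search_tree_NodeD(2)[OF assms(1)] by (simp add: distinct_map)
  then have "tset t1 \<noteq> tset t2" using assms(2-4) by (meson inj_on_def)
  then show ?thesis
    using comps_disjoint[OF search_tree_child(1)[OF assms(1,2)] search_tree_child(1)[OF assms(1,3)]]
    by blast
qed

lemma ancestors_child:
  assumes "search_tree E S (Node r ts)" "t \<in> set ts" "x \<in> tset t"
  shows "ancestors (Node r ts) x = insert r (ancestors t x)"
proof -
  have o: "ancestors t' x = {}" if "t' \<in> set ts" "t' \<noteq> t" for t'
    using search_tree_children_disjoint[OF assms(1) that(1) assms(2) that(2)] assms(3)
      ancestors_notin[of x t'] by blast
  have "\<Union> (set (map (\<lambda>t. ancestors t x) ts)) = ancestors t x"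
    using o assms(2) by auto
  then show ?thesis using assms(2,3) by (auto simp: ancestors.simps)
qed

lemma ancestors_root:
  assumes "search_tree E S (Node r ts)"
  shows "ancestors (Node r ts) r = {r}"
proof -
  have "ancestors t r = {}" if "t \<in> set ts" for t
    using search_tree_child(2)[OF assms that] ancestors_notin[of r t] by blast
  then show ?thesis by (auto simp: ancestors.simps)
qed

lemma card_ancestors_child:
  assumes "search_tree E S (Node r ts)" "t \<in> set ts" "x \<in> tset t"
  shows "card (ancestors (Node r ts) x) = Suc (card (ancestors t x))"
proof -
  have "r \<notin> ancestors t x"
    using ancestors_subset[of t x] search_tree_child(2)[OF assms(1,2)] by blast
  then show ?thesis
    using ancestors_child[OF assms] by (simp add: card_insert_disjoint finite_ancestors)
qed

lemma search_tree_distinct_children: "search_tree E S (Node r ts) \<Longrightarrow> distinct ts"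
proof -
  assume "search_tree E S (Node r ts)"
  from search_tree_NodeD(2)[OF this] show ?thesis by (simp add: distinct_map)
qed

lemma cost_at_eq_sum_ancestors:
  "search_tree E S T \<Longrightarrow> cost_at w d T = (\<Sum>x\<in>S. w x * (real d - 1 + real (card (ancestors T x))))"
proof (induction arbitrary: d rule: search_tree_induct)
  case (node r S ts)
  let ?T = "Node r ts"
  have st: "search_tree E S ?T" using node by (intro search_tree.intros) auto
  let ?f = "\<lambda>x. w x * (real d - 1 + real (card (ancestors ?T x)))"
  have dist: "distinct ts" using search_tree_distinct_children[OF st] .
  have IH: "cost_at w (Suc d) t = (\<Sum>x\<in>tset t. ?f x)" if "t \<in> set ts" for t
  proof -
    have "cost_at w (Suc d) t = (\<Sum>x\<in>tset t. w x * (real (Suc d) - 1 + real (card (ancestors t x))))"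
      using node(5) that by blast
    also have "\<dots> = (\<Sum>x\<in>tset t. ?f x)"
      by (rule sum.cong) (auto simp: card_ancestors_child[OF st that])
    finally show ?thesis .
  qed
  have "cost_at w d ?T = w r * real d + (\<Sum>t\<in>set ts. cost_at w (Suc d) t)"
    using dist by (simp add: sum_list_distinct_conv_sum_set)
  also have "\<dots> = w r * real d + (\<Sum>t\<in>set ts. \<Sum>x\<in>tset t. ?f x)"
    using IH by simp
  also have "(\<Sum>t\<in>set ts. \<Sum>x\<in>tset t. ?f x) = (\<Sum>x\<in>\<Union>(tset ` set ts). ?f x)"
    by (rule sum.UNION_disjoint[symmetric])
      (use search_tree_children_disjoint[OF st] in \<open>auto simp: finite_tset\<close>)
  also have "\<Union>(tset ` set ts) = S - {r}"
    using node(3) Union_comps[of "S - {r}"] by simp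
  also have "w r * real d = ?f r" using ancestors_root[OF st] by simp
  also have "?f r + (\<Sum>x\<in>S - {r}. ?f x) = (\<Sum>x\<in>S. ?f x)"
  proof -
    have fS: "finite S" using finite_tset[of ?T] unfolding search_tree_tset[OF st] .
    show ?thesis by (simp add: sum.remove[OF fS node(1)])
  qed
  finally show ?case .
qed

lemma cost_eq_sum_ancestors:
  "search_tree E S T \<Longrightarrow> cost w T = (\<Sum>x\<in>S. w x * real (card (ancestors T x)))"
  unfolding cost_def using cost_at_eq_sum_ancestors[of S T w 1] by simp

lemma cost_Node:
  assumes st: "search_tree E S (Node c cs)"
  shows "cost w (Node c cs) = sum w S + (\<Sum>t\<in>set cs. cost w t)"
proof -
  have dist: "distinct cs" using search_tree_distinct_children[OF st] .
  have c2: "cost_at w 2 t = sum w (tset t) + cost w t" if "t \<in> set cs" for t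
  proof -
    have stt: "search_tree E (tset t) t" using search_tree_NodeD(4)[OF st that] .
    have "cost_at w 2 t = (\<Sum>x\<in>tset t. w x * (1 + real (card (ancestors t x))))"
      using cost_at_eq_sum_ancestors[OF stt, of w 2] by simp
    also have "\<dots> = sum w (tset t) + (\<Sum>x\<in>tset t. w x * real (card (ancestors t x)))"
      by (simp add: distrib_left sum.distrib)
    finally show ?thesis using cost_eq_sum_ancestors[OF stt, of w] by simp
  qed
  have "cost w (Node c cs) = w c + (\<Sum>t\<in>set cs. cost_at w 2 t)"
    unfolding cost_def using dist by (simp add: sum_list_distinct_conv_sum_set numeral_2_eq_2)
  also have "\<dots> = w c + (\<Sum>t\<in>set cs. sum w (tset t)) + (\<Sum>t\<in>set cs. cost w t)"
    using c2 by (simp add: sum.distrib)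
  also have "(\<Sum>t\<in>set cs. sum w (tset t)) = sum w (\<Union>(tset ` set cs))"
    by (rule sum.UNION_disjoint[symmetric])
      (use search_tree_children_disjoint[OF st] in \<open>auto simp: finite_tset\<close>)
  also have "\<Union>(tset ` set cs) = S - {c}"
    using search_tree_NodeD(3)[OF st] Union_comps[of "S - {c}"] by simp
  also have "w c + sum w (S - {c}) = sum w S"
  proof -
    have fS: "finite S" using finite_tset[of "Node c cs"] unfolding search_tree_tset[OF st] .
    show ?thesis by (simp add: sum.remove[OF fS search_tree_NodeD(1)[OF st]])
  qed
  finally show ?thesis .
qed

lemma connected_common_ancestor:
  "search_tree E S T \<Longrightarrow> graph_connected E U \<Longrightarrow> U \<subseteq> S \<Longrightarrow> U \<noteq> {} \<Longrightarrow> \<exists>\<rho>\<in>U. \<forall>x\<in>U. \<rho> \<in> ancestors T x"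
proof (induction arbitrary: U rule: search_tree_induct)
  case (node r S ts)
  let ?T = "Node r ts"
  have st: "search_tree E S ?T" using node(1-4) by (intro search_tree.intros) auto
  show ?case
  proof (cases "r \<in> U")
    case True
    have "r \<in> ancestors ?T x" if "x \<in> U" for x
    proof -
      have "x \<in> tset ?T" using that node.prems(2) search_tree_tset[OF st] by blast
      then show ?thesis using root_in_ancestors[of x ?T] by simp
    qed
    then show ?thesis using True by blast
  next
    case False
    then have "U \<subseteq> S - {r}" using node.prems(2) by blast
    then obtain C where C: "C \<in> comps E (S - {r})" "U \<subseteq> C"
      using connected_in_comp[OF node.prems(1) _ node.prems(3)] by blast
    then obtain t where t: "t \<in> set ts" "tset t = C" using node(3) by (metis imageE list.set_map)
    then obtain \<rho> where \<rho>: "\<rho> \<in> U" "\<forall>x\<in>U. \<rho> \<in> ancestors t x"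
      using node(5)[OF t(1) node.prems(1) _ node.prems(3)] C(2) by blast
    have "\<rho> \<in> ancestors ?T x" if "x \<in> U" for x
      using ancestors_child[OF st t(1)] \<rho> that C(2) t(2) by blast
    then show ?thesis using \<rho>(1) by blast
  qed
qed

lemma cost_Node_le:
  assumes st: "search_tree E U (Node c cs)"
    and b: "\<And>t. t \<in> set cs \<Longrightarrow> cost w t \<le> G (tset t)"
  shows "cost w (Node c cs) \<le> sum w U + (\<Sum>K\<in>comps E (U - {c}). G K)"
proof -
  have inj: "inj_on tset (set cs)" using search_tree_NodeD(2)[OF st] by (simp add: distinct_map)
  have img: "tset ` set cs = comps E (U - {c})" using search_tree_NodeD(3)[OF st] by simp
  have "(\<Sum>t\<in>set cs. cost w t) \<le> (\<Sum>t\<in>set cs. G (tset t))" using b by (rule sum_mono)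
  also have "\<dots> = (\<Sum>K\<in>tset ` set cs. G K)" using sum.reindex[OF inj, of G] by simp
  finally show ?thesis using cost_Node[OF st, of w] img by simp
qed

lemma finite_search_trees: "finite S \<Longrightarrow> finite {T. search_tree E S T}"
proof (induction "card S" arbitrary: S rule: less_induct)
  case less
  define A where "A = (\<Union>r\<in>S. \<Union>K\<in>comps E (S - {r}). {T. search_tree E K T})"
  have "finite {T. search_tree E K T}" if r: "r \<in> S" and K: "K \<in> comps E (S - {r})" for r K
  proof (rule less.hyps)
    have "K \<subset> S" using comps_subset[OF K] r by blast
    then show "card K < card S" "finite K"
      using psubset_card_mono[OF less.prems] finite_subset[OF _ less.prems] by auto
  qed
  then have "finite A" unfolding A_def using less.prems finite_comps by blast
  let ?L = "{ts. set ts \<subseteq> A \<and> length ts \<le> card (Pow S)}"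
  have "{T. search_tree E S T} \<subseteq> (\<lambda>(r, ts). Node r ts) ` (S \<times> ?L)"
  proof
    fix T assume "T \<in> {T. search_tree E S T}"
    moreover obtain r ts where T: "T = Node r ts" by (cases T)
    ultimately have st: "search_tree E S (Node r ts)" by simp
    note facts = search_tree_NodeD[OF st]
    have "set ts \<subseteq> A"
    proof
      fix t assume t: "t \<in> set ts"
      then have "tset t \<in> comps E (S - {r})" using facts(3) by auto
      then show "t \<in> A" unfolding A_def using facts(1) facts(4)[OF t] by blast
    qed
    moreover have "length ts \<le> card (Pow S)"
      using distinct_card[OF facts(2)] facts(3) card_mono[of "Pow S" "comps E (S - {r})"]
        comps_subset less.prems by fastforce
    ultimately show "T \<in> (\<lambda>(r, ts). Node r ts) ` (S \<times> ?L)" using T facts(1) by auto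
  qed
  moreover have "finite (S \<times> ?L)"
    using less.prems finite_lists_length_le[OF \<open>finite A\<close>] by blast
  ultimately show ?case using finite_subset by blast
qed

end

section \<open>Centroid trees\<close>

context sym_graph
begin

lemma centroid_tree_NodeD:
  assumes ct: "centroid_tree U E w (Node c cs)"
  shows "c \<in> U" "is_centroid E U w c" "search_tree E U (Node c cs)"
    "\<And>t. t \<in> set cs \<Longrightarrow> centroid_tree (tset t) E w t"
    "\<And>t. t \<in> set cs \<Longrightarrow> tset t \<in> comps E (U - {c})"
proof -
  show st: "search_tree E U (Node c cs)" using ct unfolding centroid_tree_def by blast
  show "c \<in> U" using search_tree_NodeD(1)[OF st] .
  have "is_centroid E (tset (Node c cs)) w (root (Node c cs))"
    using ct unfolding centroid_tree_def by simp
  then show "is_centroid E U w c" using search_tree_tset[OF st] by simp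
  fix t assume t: "t \<in> set cs"
  show "tset t \<in> comps E (U - {c})" using search_tree_child(1)[OF st t] .
  have "subtrees t \<subseteq> subtrees (Node c cs)" using t by auto
  then show "centroid_tree (tset t) E w t"
    using ct search_tree_NodeD(4)[OF st t] unfolding centroid_tree_def by blast
qed

lemma centroid_tree_NodeI:
  assumes c: "is_centroid E U w c" and fin: "finite U"
    and children: "\<forall>K\<in>comps E (U - {c}). \<exists>t. centroid_tree K E w t"
  shows "\<exists>C. centroid_tree U E w C"
proof -
  let ?Cs = "comps E (U - {c})"
  obtain g where g: "\<forall>K\<in>?Cs. centroid_tree K E w (g K)" using children by metis
  have g_st: "search_tree E K (g K)" and g_tset: "tset (g K) = K" if "K \<in> ?Cs" for K
    using g that search_tree_tset unfolding centroid_tree_def by blast+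
  obtain L where L: "set L = ?Cs" "distinct L"
    using finite_distinct_list[OF finite_comps[of "U - {c}"]] fin by blast
  define ts where "ts = map g L"
  have "map tset ts = L" unfolding ts_def map_map by (rule map_idI) (use g_tset L(1) in auto)
  then have st: "search_tree E U (Node c ts)"
    using c L g_st g_tset unfolding ts_def is_centroid_def by (intro search_tree.intros) auto
  have "is_centroid E (tset s) w (root s)" if s: "s \<in> subtrees (Node c ts)" for s
  proof -
    consider "s = Node c ts" | K where "K \<in> ?Cs" "s \<in> subtrees (g K)"
      using s L(1) unfolding ts_def by auto
    then show ?thesis
      using c search_tree_tset[OF st] g unfolding centroid_tree_def by cases auto
  qed
  then show ?thesis using st unfolding centroid_tree_def by blast
qed

end

context tree
begin

text \<open>Call a component heavy if it carries more than half the weight. Walking from \<open>v\<close> into a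
  heavy component \<open>Dc\<close>, all heavy components seen from the neighbour \<open>u\<close> stay inside \<open>Dc\<close>:
  the component containing \<open>v\<close> is disjoint from \<open>Dc\<close>, so it is light.\<close>

lemma heavy_comp_shrinks:
  fixes w :: "'a \<Rightarrow> real"
  assumes UV: "U \<subseteq> V" and conn: "graph_connected E U" and wpos: "\<forall>x\<in>U. w x \<ge> 0"
    and v: "v \<in> U" and Dc: "Dc \<in> comps E (U - {v})" "sum w Dc > sum w U / 2"
    and u: "u \<in> Dc" "E v u"
    and K: "K \<in> comps E (U - {u})" "sum w K > sum w U / 2"
  shows "K \<subseteq> Dc - {u}"
proof -
  have finU: "finite U" using UV finite_V finite_subset by blast
  have KU: "K \<subseteq> U - {u}" and DcU: "Dc \<subseteq> U - {v}" using comps_subset K(1) Dc(1) by blast+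
  have "v \<notin> K"
  proof
    assume "v \<in> K"
    then have "K \<inter> Dc = {}" using comp_across_edge_disjoint[OF UV v Dc(1) u K(1)] by blast
    moreover have "finite K" "finite Dc" using KU DcU finU finite_subset by blast+
    ultimately have "sum w K + sum w Dc = sum w (K \<union> Dc)" by (simp add: sum.union_disjoint)
    also have "\<dots> \<le> sum w U"
      using KU DcU wpos by (intro sum_mono2[OF finU]) auto
    finally show False using K(2) Dc(2) by simp
  qed
  have uU: "u \<in> U" using u(1) DcU by blast
  obtain y where y: "y \<in> K" "E u y" using comps_neighbour[OF conn uU K(1)] by blast
  have "y \<in> U - {v}" using y(1) KU \<open>v \<notin> K\<close> by blast
  then have yDc: "y \<in> Dc" using comps_closed[OF Dc(1) u(1) _ y(2)] by blast
  have "K \<subseteq> U - {v}" using KU \<open>v \<notin> K\<close> by blast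
  then obtain B where B: "B \<in> comps E (U - {v})" "K \<subseteq> B"
    using connected_in_comp[OF comps_connected[OF K(1)] _ comps_nonempty[OF K(1)]] by blast
  have "B = Dc" using comps_eq[OF B(1) Dc(1)] B(2) y(1) yDc by blast
  then show ?thesis using B(2) KU by blast
qed

text \<open>A vertex minimising the total size of its heavy components is a centroid.\<close>

lemma centroid_exists:
  fixes w :: "'a \<Rightarrow> real"
  assumes UV: "U \<subseteq> V" and conn: "graph_connected E U" and ne: "U \<noteq> {}" and wpos: "\<forall>x\<in>U. w x \<ge> 0"
  shows "\<exists>c. is_centroid E U w c"
proof -
  have finU: "finite U" using UV finite_V finite_subset by blast
  define heavy where "heavy x = {K \<in> comps E (U - {x}). sum w K > sum w U / 2}" for x
  have fin_heavy: "finite (heavy x)" for x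
    unfolding heavy_def using finite_comps[of "U - {x}"] finU by simp
  define f where "f x = (\<Sum>K\<in>heavy x. card K)" for x
  obtain v where v: "v \<in> U" "\<forall>x\<in>U. f v \<le> f x"
    using arg_min_if_finite(1,2)[OF finU ne, of f] by (metis not_le)
  have "heavy v = {}"
  proof (rule ccontr)
    assume "heavy v \<noteq> {}"
    then obtain Dc where Dc: "Dc \<in> heavy v" by blast
    then obtain u where u: "u \<in> Dc" "E v u"
      using comps_neighbour[OF conn v(1)] unfolding heavy_def by blast
    have DcU: "Dc \<subseteq> U - {v}" using Dc comps_subset unfolding heavy_def by blast
    then have finDc: "finite Dc" using finU finite_subset by blast
    have sub: "K \<subseteq> Dc - {u}" if "K \<in> heavy u" for K
      using heavy_comp_shrinks[OF UV conn wpos v(1) _ _ u] Dc that unfolding heavy_def by blast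
    have "f u = card (\<Union>(heavy u))"
      unfolding f_def
    proof (rule card_Union_disjoint[symmetric])
      show "pairwise disjnt (heavy u)"
        using comps_pairwise_disjnt unfolding heavy_def pairwise_def by blast
      show "finite K" if "K \<in> heavy u" for K using sub[OF that] finDc finite_subset by blast
    qed
    also have "\<dots> < card Dc"
      using card_mono[OF _ Union_least[OF sub]] card_Diff1_less[OF finDc u(1)] finDc by fastforce
    also have "\<dots> \<le> f v"
      unfolding f_def using member_le_sum[OF Dc, of card] fin_heavy by simp
    finally show False using v(2) u(1) DcU by fastforce
  qed
  then have "is_centroid E U w v" using v(1) unfolding is_centroid_def heavy_def by fastforce
  then show ?thesis by blast
qed

lemma centroid_tree_exists:
  fixes w :: "'a \<Rightarrow> real"
  assumes "U \<subseteq> V" "graph_connected E U" "U \<noteq> {}" "\<forall>x\<in>V. w x \<ge> 0"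
  shows "\<exists>C. centroid_tree U E w C"
  using assms(1-3)
proof (induction "card U" arbitrary: U rule: less_induct)
  case less
  have finU: "finite U" using less.prems(1) finite_V finite_subset by blast
  obtain c where c: "is_centroid E U w c"
    using centroid_exists[OF less.prems] assms(4) less.prems(1) by blast
  have "\<exists>t. centroid_tree K E w t" if K: "K \<in> comps E (U - {c})" for K
  proof (rule less.hyps)
    show "card K < card U"
      using psubset_card_mono[OF finU] comps_subset[OF K] c unfolding is_centroid_def by blast
  qed (use comps_subset[OF K] less.prems(1) comps_connected[OF K] comps_nonempty[OF K] in auto)
  then show ?case using centroid_tree_NodeI[OF c finU] by blast
qed

end

section \<open>The approximation ratio\<close>

definition ratio :: "nat \<Rightarrow> real" where
  "ratio e = 2 - 1 / 2 ^ e"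

lemma ratio_ge_1: "1 \<le> ratio e"
  unfolding ratio_def by (simp add: field_simps)

lemma ratio_mono: "e \<le> e' \<Longrightarrow> ratio e \<le> ratio e'"
  unfolding ratio_def by (simp add: field_simps power_increasing)

lemma ratio_Suc: "ratio (Suc e) = 1 + ratio e / 2"
  unfolding ratio_def by (simp add: field_simps)

lemma ratio_bound_step:
  fixes W W' X Y :: real
  assumes "2 * W' \<le> W" "0 \<le> W" "Y \<le> X - (W - W')"
  shows "W + ratio e * (W' + Y) \<le> ratio e * (W + X)"
proof -
  have "ratio e * (W' + Y) \<le> ratio e * X"
    using assms ratio_ge_1[of e] by (intro mult_left_mono) auto
  moreover have "W \<le> ratio e * W"
    using assms(2) ratio_ge_1[of e] by (simp add: mult_le_cancel_right1)
  ultimately show ?thesis by (simp add: algebra_simps)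
qed

lemma ratio_bound_Suc_step:
  fixes W W' X Y :: real
  assumes "2 * W' \<le> W" "0 \<le> X" "Y \<le> X"
  shows "W + ratio e * (W' + Y) \<le> ratio (Suc e) * (W + X)"
proof -
  have "ratio e * (W' + Y) \<le> ratio e * (W / 2 + X)"
    using assms ratio_ge_1[of e] by (intro mult_left_mono) auto
  moreover have "ratio e * X \<le> ratio (Suc e) * X"
    using assms(2) ratio_mono[of e "Suc e"] by (intro mult_right_mono) auto
  moreover have "ratio (Suc e) * (W + X) = W + ratio e * (W / 2) + ratio (Suc e) * X"
    unfolding ratio_Suc by (simp add: algebra_simps)
  moreover have "ratio e * (W / 2 + X) = ratio e * (W / 2) + ratio e * X"
    by (simp add: distrib_left)
  ultimately show ?thesis by linarith
qed

section \<open>Projections of a reference search tree\<close>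

locale reference_tree = sym_graph E for E :: "'a \<Rightarrow> 'a \<Rightarrow> bool" +
  fixes V :: "'a set" and w :: "'a \<Rightarrow> real" and T :: "'a rtree" and D :: nat
  assumes finite_V: "finite V"
    and nonneg: "x \<in> V \<Longrightarrow> 0 \<le> w x"
    and search_tree_T: "search_tree E V T"
    and degree_le: "v \<in> V \<Longrightarrow> card {u \<in> V. E v u} \<le> D"
begin

text \<open>\<open>proj_cost U\<close> is the cost of the search tree that \<open>T\<close> induces on a connected \<open>U\<close>: there a
  vertex \<open>x\<close> has depth \<open>depth_in U x\<close>, the number of its \<open>T\<close>-ancestors lying in \<open>U\<close>.\<close>

definition depth_in :: "'a set \<Rightarrow> 'a \<Rightarrow> nat" where
  "depth_in U x = card {y \<in> U. y \<in> ancestors T x}"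

definition proj_cost :: "'a set \<Rightarrow> real" where
  "proj_cost U = (\<Sum>x\<in>U. w x * real (depth_in U x))"

lemma proj_cost_V: "proj_cost V = cost w T"
proof -
  have "{y \<in> V. y \<in> ancestors T x} = ancestors T x" for x
    using ancestors_subset[of T x] search_tree_tset[OF search_tree_T] by blast
  then show ?thesis
    unfolding proj_cost_def depth_in_def using cost_eq_sum_ancestors[OF search_tree_T] by simp
qed

lemma finite_if_subset_V: "U \<subseteq> V \<Longrightarrow> finite U"
  using finite_V finite_subset by auto

lemma sum_weight_nonneg: "U \<subseteq> V \<Longrightarrow> 0 \<le> sum w U"
  using nonneg by (meson subsetD sum_nonneg)

lemma sum_weight_comps_nonneg:
  assumes "U \<subseteq> V" "F \<subseteq> comps E (U - {r})"
  shows "0 \<le> (\<Sum>B\<in>F. sum w B)"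
proof (rule sum_nonneg)
  fix B assume "B \<in> F"
  then have "B \<subseteq> V" using assms comps_subset by blast
  then show "0 \<le> sum w B" by (rule sum_weight_nonneg)
qed

lemma depth_in_ge_1: "U \<subseteq> V \<Longrightarrow> x \<in> U \<Longrightarrow> 1 \<le> depth_in U x"
proof -
  assume "U \<subseteq> V" "x \<in> U"
  then have "x \<in> {y \<in> U. y \<in> ancestors T x}"
    using self_in_ancestors[of x T] search_tree_tset[OF search_tree_T] by blast
  moreover have "finite {y \<in> U. y \<in> ancestors T x}"
    using finite_ancestors[of T x] by (simp add: Collect_conj_eq)
  ultimately show ?thesis
    unfolding depth_in_def by (metis One_nat_def Suc_leI card_gt_0_iff empty_iff)
qed

lemma depth_in_mono: "P \<subseteq> U \<Longrightarrow> finite U \<Longrightarrow> depth_in P x \<le> depth_in U x"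
  unfolding depth_in_def by (rule card_mono) auto

lemma depth_in_less:
  assumes "P \<subseteq> U" "finite U" "\<rho> \<in> U - P" "\<rho> \<in> ancestors T x"
  shows "depth_in P x < depth_in U x"
proof -
  have "finite {y \<in> U. y \<in> ancestors T x}" using assms(2) by simp
  moreover have "{y \<in> P. y \<in> ancestors T x} \<subset> {y \<in> U. y \<in> ancestors T x}" using assms by blast
  ultimately show ?thesis unfolding depth_in_def by (rule psubset_card_mono)
qed

text \<open>A common \<open>T\<close>-ancestor \<open>\<rho>\<close> of \<open>U\<close> lies above every vertex of a part \<open>P\<close> of \<open>U\<close> not containing
  it, so the vertices of such parts lose at least one unit of depth when \<open>U\<close> is split into parts.\<close>

lemma proj_cost_split:
  assumes UV: "U \<subseteq> V" and \<rho>: "\<rho> \<in> U" "\<forall>x\<in>U. \<rho> \<in> ancestors T x"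
    and Ps: "finite Ps" "\<forall>P\<in>Ps. P \<subseteq> U" "pairwise disjnt Ps"
    and P0: "\<forall>P\<in>Ps. \<rho> \<in> P \<longrightarrow> P \<subseteq> P0"
  shows "(\<Sum>P\<in>Ps. proj_cost P) + sum w (U - P0) \<le> proj_cost U"
proof -
  have finU: "finite U" using finite_if_subset_V[OF UV] .
  define h where "h x = real (depth_in U x) - (if x \<in> P0 then 0 else 1)" for x
  have depth_le: "real (depth_in P x) \<le> h x" if P: "P \<in> Ps" "x \<in> P" for P x
  proof (cases "x \<in> P0")
    case True
    have "P \<subseteq> U" using Ps(2) P(1) by blast
    then show ?thesis using depth_in_mono[OF _ finU] True unfolding h_def by simp
  next
    case False
    then have "\<rho> \<in> U - P" using P0 P \<rho>(1) by blast
    moreover have "P \<subseteq> U" using Ps(2) P(1) by blast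
    ultimately have "depth_in P x < depth_in U x" using depth_in_less[OF _ finU] \<rho>(2) P(2) by blast
    then show ?thesis using False unfolding h_def by simp
  qed
  have "(\<Sum>P\<in>Ps. proj_cost P) \<le> (\<Sum>P\<in>Ps. \<Sum>x\<in>P. w x * h x)"
    unfolding proj_cost_def using depth_le Ps(2) UV
    by (intro sum_mono mult_left_mono; blast intro: nonneg)
  also have "\<dots> = (\<Sum>x\<in>\<Union>Ps. w x * h x)"
    using Ps finU finite_subset by (intro sum_Union_pairwise_disjnt[symmetric]) blast+
  also have "\<dots> \<le> (\<Sum>x\<in>U. w x * h x)"
  proof (rule sum_mono2[OF finU])
    show "\<Union>Ps \<subseteq> U" using Ps(2) by blast
    show "0 \<le> w x * h x" if "x \<in> U - \<Union>Ps" for x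
      using that UV nonneg depth_in_ge_1[OF UV, of x] unfolding h_def by auto
  qed
  also have "(\<Sum>x\<in>U. w x * h x) = proj_cost U - (\<Sum>x\<in>U. if x \<in> P0 then 0 else w x)"
    unfolding proj_cost_def h_def sum_subtractf[symmetric]
    by (intro sum.cong) (auto simp: algebra_simps)
  also have "(\<Sum>x\<in>U. if x \<in> P0 then 0 else w x) = sum w (U - P0)"
    using finU by (simp add: sum.If_cases Diff_eq)
  finally show ?thesis by simp
qed

lemma card_comps_le_degree:
  assumes "graph_connected E U" "U \<subseteq> V" "\<rho> \<in> U"
  shows "card (comps E (U - {\<rho>})) \<le> D"
proof -
  let ?Cs = "comps E (U - {\<rho>})"
  obtain f where f: "\<forall>B\<in>?Cs. f B \<in> B \<and> E \<rho> (f B)" using comps_neighbour[OF assms(1,3)] by metis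
  have "inj_on f ?Cs"
  proof (rule inj_onI)
    fix B1 B2 assume "B1 \<in> ?Cs" "B2 \<in> ?Cs" "f B1 = f B2"
    then show "B1 = B2" using comps_eq[of B1 "U - {\<rho>}" B2 "f B1"] f by metis
  qed
  moreover have "f ` ?Cs \<subseteq> {u \<in> V. E \<rho> u}" using f comps_subset assms(2) by blast
  ultimately have "card ?Cs \<le> card {u \<in> V. E \<rho> u}"
    using card_inj_on_le finite_V by fastforce
  also have "\<dots> \<le> D" using degree_le assms by blast
  finally show ?thesis .
qed

end

section \<open>Components around a centroid\<close>

text \<open>The components of \<open>U' - {r}\<close> are those of \<open>U - {r}\<close> other than \<open>B0\<close>, together
  with the pieces \<open>Qs\<close> cut out of \<open>B0\<close>; the remaining components \<open>Rs\<close> of \<open>U - {c}\<close> lie in \<open>B0\<close> too.\<close>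

locale centroid_split = sym_graph E for E :: "'a \<Rightarrow> 'a \<Rightarrow> bool" +
  fixes U r c B0 U'
  assumes connected_U: "graph_connected E U" and r_in_U: "r \<in> U" and c_in_U: "c \<in> U"
    and c_neq_r: "c \<noteq> r"
    and B0: "B0 \<in> comps E (U - {r})" and c_in_B0: "c \<in> B0"
    and U': "U' \<in> comps E (U - {c})" and r_in_U': "r \<in> U'"
begin

definition Rs :: "'a set set" where
  "Rs = comps E (U - {c}) - {U'}"

definition Qs :: "'a set set" where
  "Qs = comps E (U' - {r}) - comps E (U - {r})"

lemma U'_subset: "U' \<subseteq> U - {c}"
  using comps_subset[OF U'] .

lemma comps_without_c: "comps E (U - {c}) = insert U' Rs" "U' \<notin> Rs"
  unfolding Rs_def using U' by blast+

lemma Rs_comps: "R \<in> Rs \<Longrightarrow> R \<in> comps E (U - {c})"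
  unfolding Rs_def by blast

lemma Rs_disjoint_U': "R \<in> Rs \<Longrightarrow> R \<inter> U' = {}"
  unfolding Rs_def using comps_disjoint[OF _ U'] by blast

lemma Rs_subset_B0:
  assumes R: "R \<in> Rs"
  shows "R \<subseteq> B0 - {c}"
proof -
  have RC: "R \<in> comps E (U - {c})" using Rs_comps[OF R] .
  have "R \<subseteq> U - {r}" using comps_subset[OF RC] Rs_disjoint_U'[OF R] r_in_U' by blast
  then obtain B where B: "B \<in> comps E (U - {r})" "R \<subseteq> B"
    using connected_in_comp[OF comps_connected[OF RC] _ comps_nonempty[OF RC]] by blast
  obtain y where y: "y \<in> R" "E c y" using comps_neighbour[OF connected_U c_in_U RC] by blast
  have "y \<in> B0" using comps_closed[OF B0 c_in_B0 _ y(2)] y(1) \<open>R \<subseteq> U - {r}\<close> by blast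
  then have "B = B0" using comps_eq[OF B(1) B0] B(2) y(1) by blast
  then show ?thesis using B(2) comps_subset[OF RC] by blast
qed

lemma other_comps_of_r:
  assumes B: "B \<in> comps E (U - {r})" "B \<noteq> B0"
  shows "B \<in> comps E (U' - {r})"
proof -
  have "c \<notin> B" using comps_disjoint[OF B(1) B0 B(2)] c_in_B0 by blast
  then have Bsub: "B \<subseteq> U - {c}" using comps_subset[OF B(1)] by blast
  obtain K where K: "K \<in> comps E (U - {c})" "B \<subseteq> K"
    using connected_in_comp[OF comps_connected[OF B(1)] Bsub comps_nonempty[OF B(1)]] by blast
  obtain y where y: "y \<in> B" "E r y" using comps_neighbour[OF connected_U r_in_U B(1)] by blast
  have "r \<in> K" using comps_closed[OF K(1) _ _ sym[OF y(2)]] K(2) y(1) r_in_U c_neq_r by blast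
  then have "K = U'" using comps_eq[OF K(1) U'] r_in_U' by blast
  then have "B \<subseteq> U' - {r}" using K(2) comps_subset[OF B(1)] by blast
  then show ?thesis using comps_restrict[OF B(1)] U'_subset by blast
qed

lemma Qs_subset_B0:
  assumes Q: "Q \<in> Qs"
  shows "Q \<subseteq> B0 - {c}"
proof -
  have QC: "Q \<in> comps E (U' - {r})" and new: "Q \<notin> comps E (U - {r})"
    using Q unfolding Qs_def by blast+
  have Qsub: "Q \<subseteq> U - {r}" using comps_subset[OF QC] U'_subset by blast
  obtain B where B: "B \<in> comps E (U - {r})" "Q \<subseteq> B"
    using connected_in_comp[OF comps_connected[OF QC] Qsub comps_nonempty[OF QC]] by blast
  have "B = B0"
  proof (rule ccontr)
    assume "B \<noteq> B0"
    then have "B \<in> comps E (U' - {r})" using other_comps_of_r B(1) by blast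
    moreover obtain x where "x \<in> Q" using comps_nonempty[OF QC] by blast
    ultimately have "Q = B" using comps_eq[OF QC] B(2) by blast
    then show False using new B(1) by blast
  qed
  then show ?thesis using B(2) comps_subset[OF QC] U'_subset by blast
qed

lemma comps_without_r: "comps E (U' - {r}) = (comps E (U - {r}) - {B0}) \<union> Qs"
proof -
  have "B0 \<notin> comps E (U' - {r})"
    using comps_subset U'_subset c_in_B0 by blast
  then show ?thesis using other_comps_of_r unfolding Qs_def by blast
qed

lemma Qs_subset_U': "Q \<in> Qs \<Longrightarrow> Q \<subseteq> U'"
  unfolding Qs_def using comps_subset by blast

lemma Qs_Rs_disjoint: "Qs \<inter> Rs = {}"
proof -
  have "Q \<notin> Rs" if "Q \<in> Qs" for Q
  proof
    assume "Q \<in> Rs"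
    then have "Q \<inter> U' = {}" by (rule Rs_disjoint_U')
    moreover have "Q \<noteq> {}" using that comps_nonempty unfolding Qs_def by blast
    ultimately show False using Qs_subset_U'[OF that] by blast
  qed
  then show ?thesis by blast
qed

lemma pairwise_disjnt_Qs_Rs: "pairwise disjnt (Qs \<union> Rs)"
proof (rule pairwiseI)
  fix P P' assume P: "P \<in> Qs \<union> Rs" and P': "P' \<in> Qs \<union> Rs" and "P \<noteq> P'"
  have QR: "disjnt Q R" if "Q \<in> Qs" "R \<in> Rs" for Q R
    using Qs_subset_U'[OF that(1)] Rs_disjoint_U'[OF that(2)] unfolding disjnt_def by blast
  have QQ: "pairwise disjnt Qs" using comps_pairwise_disjnt[of "U' - {r}"] unfolding Qs_def
    by (rule pairwise_subset) blast
  have RR: "pairwise disjnt Rs" using comps_pairwise_disjnt[of "U - {c}"] unfolding Rs_def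
    by (rule pairwise_subset) blast
  show "disjnt P P'"
    using P P' \<open>P \<noteq> P'\<close> QR QR[of P' P] QQ RR unfolding pairwise_def
    by (auto simp: disjnt_sym)
qed

lemma finite_Qs: "finite U \<Longrightarrow> finite Qs"
  unfolding Qs_def using finite_comps[of "U' - {r}"] U'_subset finite_subset by blast

lemma finite_Rs: "finite U \<Longrightarrow> finite Rs"
  unfolding Rs_def using finite_comps[of "U - {c}"] by blast

end

section \<open>The inductive bound\<close>

context reference_tree
begin

definition budget :: "'a set \<Rightarrow> 'a \<Rightarrow> 'a set set \<Rightarrow> nat \<Rightarrow> real" where
  "budget U r F e =
     ratio e * (sum w U + (\<Sum>B\<in>F. sum w B)) + ratio D * (\<Sum>B\<in>comps E (U - {r}). proj_cost B)"

definition rooted_bound :: "'a set \<Rightarrow> bool" where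
  "rooted_bound U \<longleftrightarrow> (\<forall>r F e C. r \<in> U \<longrightarrow> F \<subseteq> comps E (U - {r}) \<longrightarrow>
     card (comps E (U - {r}) - F) \<le> e \<longrightarrow> e \<le> D \<longrightarrow> centroid_tree U E w C \<longrightarrow>
     cost w C \<le> budget U r F e)"

definition centroid_bound :: "'a set \<Rightarrow> bool" where
  "centroid_bound U \<longleftrightarrow> (\<forall>C. centroid_tree U E w C \<longrightarrow> cost w C \<le> ratio D * proj_cost U)"

lemma rooted_boundD:
  assumes "rooted_bound U" "r \<in> U" "F \<subseteq> comps E (U - {r})" "card (comps E (U - {r}) - F) \<le> e"
    "e \<le> D" "centroid_tree U E w C"
  shows "cost w C \<le> budget U r F e"
  using assms(1)[unfolded rooted_bound_def, rule_format, OF assms(2-)] .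

lemma centroid_boundD: "centroid_bound U \<Longrightarrow> centroid_tree U E w C \<Longrightarrow> cost w C \<le> ratio D * proj_cost U"
  unfolding centroid_bound_def by blast

lemma centroid_bound_if_rooted_bound:
  assumes UV: "U \<subseteq> V" and conn: "graph_connected E U" and ne: "U \<noteq> {}" and rooted: "rooted_bound U"
  shows "centroid_bound U"
  unfolding centroid_bound_def
proof (intro allI impI)
  fix C assume C: "centroid_tree U E w C"
  obtain \<rho> where \<rho>: "\<rho> \<in> U" "\<forall>x\<in>U. \<rho> \<in> ancestors T x"
    using connected_common_ancestor[OF search_tree_T conn UV ne] by blast
  let ?Bs = "comps E (U - {\<rho>})"
  have deg: "card ?Bs \<le> D" using card_comps_le_degree[OF conn UV \<rho>(1)] .
  have fin: "finite ?Bs" using finite_comps finite_if_subset_V[OF UV] by simp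
  have split: "(\<Sum>B\<in>?Bs. proj_cost B) + sum w U \<le> proj_cost U"
    using proj_cost_split[OF UV \<rho> fin _ comps_pairwise_disjnt, of "{}"] comps_subset by auto
  have "cost w C \<le> budget U \<rho> {} (card ?Bs)"
    by (rule rooted_boundD[OF rooted \<rho>(1) _ _ deg C]) auto
  also have "\<dots> = ratio (card ?Bs) * sum w U + ratio D * (\<Sum>B\<in>?Bs. proj_cost B)"
    unfolding budget_def by simp
  also have "\<dots> \<le> ratio D * sum w U + ratio D * (\<Sum>B\<in>?Bs. proj_cost B)"
    using mult_right_mono[OF ratio_mono[OF deg] sum_weight_nonneg[OF UV]] by simp
  also have "\<dots> \<le> ratio D * proj_cost U"
    using mult_left_mono[OF split] ratio_ge_1[of D] by (simp add: distrib_left add.commute)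
  finally show "cost w C \<le> ratio D * proj_cost U" .
qed

lemma rooted_bound_at_root:
  assumes UV: "U \<subseteq> V" and C: "centroid_tree U E w (Node r cs)" and F: "F \<subseteq> comps E (U - {r})"
    and IH: "\<forall>K\<in>comps E (U - {r}). centroid_bound K"
  shows "cost w (Node r cs) \<le> budget U r F e"
proof -
  have "cost w (Node r cs) \<le> sum w U + (\<Sum>K\<in>comps E (U - {r}). ratio D * proj_cost K)"
  proof (rule cost_Node_le[OF centroid_tree_NodeD(3)[OF C]])
    fix t assume "t \<in> set cs"
    then show "cost w t \<le> ratio D * proj_cost (tset t)"
      using centroid_tree_NodeD(4,5)[OF C] IH centroid_boundD by blast
  qed
  also have "sum w U \<le> 1 * (sum w U + (\<Sum>B\<in>F. sum w B))"
    using sum_weight_comps_nonneg[OF UV F] by simp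
  also have "\<dots> \<le> ratio e * (sum w U + (\<Sum>B\<in>F. sum w B))"
    using ratio_ge_1[of e] sum_weight_nonneg[OF UV] sum_weight_comps_nonneg[OF UV F]
    by (intro mult_right_mono) auto
  finally show ?thesis unfolding budget_def by (simp add: sum_distrib_left)
qed

end

text \<open>The inductive step when the centroid \<open>c\<close> of \<open>U\<close> differs from the root \<open>r\<close>; \<open>\<rho>\<close> is the
  topmost vertex of \<open>B0\<close> in \<open>T\<close>.\<close>

locale centroid_step = reference_tree E V w T D + centroid_split E U r c B0 U'
  for E :: "'a \<Rightarrow> 'a \<Rightarrow> bool" and V w T D U r c B0 U' +
  fixes cs :: "'a rtree list" and F :: "'a set set" and \<rho> :: 'a
  assumes U_subset_V: "U \<subseteq> V"
    and centroid_tree_U: "centroid_tree U E w (Node c cs)"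
    and F_subset: "F \<subseteq> comps E (U - {r})"
    and \<rho>_in_B0: "\<rho> \<in> B0" and \<rho>_top: "\<forall>x\<in>B0. \<rho> \<in> ancestors T x"
    and rooted_bound_U': "rooted_bound U'"
    and centroid_bound_other: "\<forall>R\<in>comps E (U - {c}) - {U'}. centroid_bound R"
begin

lemma finite_U: "finite U"
  using finite_if_subset_V[OF U_subset_V] .

lemma B0_subset_V: "B0 \<subseteq> V"
  using comps_subset[OF B0] U_subset_V by blast

lemma Qs_Rs_subset_V: "P \<in> Qs \<union> Rs \<Longrightarrow> P \<subseteq> V"
  using Qs_subset_B0 Rs_subset_B0 B0_subset_V by blast

lemma weight_U: "sum w U = w c + sum w U' + (\<Sum>R\<in>Rs. sum w R)"
proof -
  have "sum w U = w c + sum w (U - {c})" using sum.remove[OF finite_U c_in_U] .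
  also have "sum w (U - {c}) = sum w U' + (\<Sum>R\<in>Rs. sum w R)"
    using sum_comps[of "U - {c}" w] finite_U comps_without_c finite_Rs[OF finite_U] by simp
  finally show ?thesis by simp
qed

lemma weight_B0: "w c + (\<Sum>R\<in>Rs. sum w R) + (\<Sum>Q\<in>Qs. sum w Q) \<le> sum w B0"
proof -
  let ?P = "\<Union>(Qs \<union> Rs)"
  have fin: "finite Qs" "finite Rs" using finite_Qs finite_Rs finite_U by blast+
  have finP: "finite P" if "P \<in> Qs \<union> Rs" for P
    using finite_if_subset_V[OF Qs_Rs_subset_V[OF that]] .
  have "(\<Sum>R\<in>Rs. sum w R) + (\<Sum>Q\<in>Qs. sum w Q) = sum w ?P"
    using sum_Union_pairwise_disjnt[OF pairwise_disjnt_Qs_Rs finP, of w]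
      sum.union_disjoint[OF fin Qs_Rs_disjoint, of "sum w"] by simp
  moreover have "c \<notin> ?P" "finite ?P" using Qs_subset_B0 Rs_subset_B0 finP fin by blast+
  moreover have "insert c ?P \<subseteq> B0" using Qs_subset_B0 Rs_subset_B0 c_in_B0 by blast
  then have "sum w (insert c ?P) \<le> sum w B0"
    using B0_subset_V finite_V finite_subset nonneg by (intro sum_mono2) blast+
  ultimately show ?thesis by simp
qed

lemma weight_U'_half: "2 * sum w U' \<le> sum w U"
  using centroid_tree_NodeD(2)[OF centroid_tree_U] U' unfolding is_centroid_def by force

lemma proj_cost_comps_le:
  assumes P0: "\<forall>P\<in>Qs \<union> Rs. \<rho> \<in> P \<longrightarrow> P \<subseteq> P0"
  shows "(\<Sum>B\<in>comps E (U' - {r}). proj_cost B) + (\<Sum>R\<in>Rs. proj_cost R) + sum w (B0 - P0)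
    \<le> (\<Sum>B\<in>comps E (U - {r}). proj_cost B)"
proof -
  let ?Bs = "comps E (U - {r})"
  have fin: "finite ?Bs" "finite Qs" "finite Rs"
    using finite_comps finite_Qs finite_Rs finite_U by blast+
  have "(\<Sum>P\<in>Qs \<union> Rs. proj_cost P) + sum w (B0 - P0) \<le> proj_cost B0"
    using proj_cost_split[OF B0_subset_V \<rho>_in_B0 \<rho>_top _ _ pairwise_disjnt_Qs_Rs P0] fin
      Qs_subset_B0 Rs_subset_B0 by blast
  moreover have "(\<Sum>P\<in>Qs \<union> Rs. proj_cost P) = (\<Sum>Q\<in>Qs. proj_cost Q) + (\<Sum>R\<in>Rs. proj_cost R)"
    using sum.union_disjoint[OF fin(2,3) Qs_Rs_disjoint] .
  moreover have "(\<Sum>B\<in>comps E (U' - {r}). proj_cost B)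
      = (\<Sum>B\<in>?Bs - {B0}. proj_cost B) + (\<Sum>Q\<in>Qs. proj_cost Q)"
    unfolding comps_without_r using fin by (intro sum.union_disjoint) (auto simp: Qs_def)
  moreover have "(\<Sum>B\<in>?Bs. proj_cost B) = proj_cost B0 + (\<Sum>B\<in>?Bs - {B0}. proj_cost B)"
    using sum.remove[OF fin(1) B0] .
  ultimately show ?thesis by linarith
qed

lemma cost_le_children:
  assumes F': "F' \<subseteq> comps E (U' - {r})" "card (comps E (U' - {r}) - F') \<le> e'" "e' \<le> D"
  shows "cost w (Node c cs) \<le> sum w U + ratio e' * (sum w U' + (\<Sum>B\<in>F'. sum w B))
    + ratio D * ((\<Sum>B\<in>comps E (U' - {r}). proj_cost B) + (\<Sum>R\<in>Rs. proj_cost R))"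
proof -
  define G where "G K = (if K = U' then ratio e' * (sum w U' + (\<Sum>B\<in>F'. sum w B))
    + ratio D * (\<Sum>B\<in>comps E (U' - {r}). proj_cost B) else ratio D * proj_cost K)" for K
  have "cost w (Node c cs) \<le> sum w U + (\<Sum>K\<in>comps E (U - {c}). G K)"
  proof (rule cost_Node_le[OF centroid_tree_NodeD(3)[OF centroid_tree_U]])
    fix t assume t: "t \<in> set cs"
    note C = centroid_tree_NodeD(4,5)[OF centroid_tree_U t]
    show "cost w t \<le> G (tset t)"
    proof (cases "tset t = U'")
      case True
      then show ?thesis
        using rooted_boundD[OF rooted_bound_U' r_in_U' F'] C(1) unfolding G_def budget_def by simp
    next
      case False
      then show ?thesis
        using centroid_boundD C centroid_bound_other unfolding G_def by auto
    qed
  qed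
  also have "(\<Sum>K\<in>comps E (U - {c}). G K) = G U' + (\<Sum>R\<in>Rs. ratio D * proj_cost R)"
    unfolding comps_without_c(1) using finite_Rs[OF finite_U] comps_without_c(2)
    by (simp add: G_def) (intro sum.cong; auto)
  finally show ?thesis by (simp add: G_def sum_distrib_left algebra_simps)
qed

lemma cost_le_recursive:
  assumes F': "F' \<subseteq> comps E (U' - {r})" "card (comps E (U' - {r}) - F') \<le> e'" "e' \<le> D"
    and P0: "\<forall>P\<in>Qs \<union> Rs. \<rho> \<in> P \<longrightarrow> P \<subseteq> P0"
  shows "cost w (Node c cs) \<le> sum w U + ratio e' * (sum w U' + ((\<Sum>B\<in>F'. sum w B) - sum w (B0 - P0)))
    + ratio D * (\<Sum>B\<in>comps E (U - {r}). proj_cost B)"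
proof -
  have "ratio e' * sum w (B0 - P0) \<le> ratio D * sum w (B0 - P0)"
    using ratio_mono[OF F'(3)] sum_weight_nonneg B0_subset_V by (intro mult_right_mono) blast+
  moreover have "ratio D * ((\<Sum>B\<in>comps E (U' - {r}). proj_cost B) + (\<Sum>R\<in>Rs. proj_cost R))
      \<le> ratio D * ((\<Sum>B\<in>comps E (U - {r}). proj_cost B) - sum w (B0 - P0))"
    using proj_cost_comps_le[OF P0] ratio_ge_1[of D] by (intro mult_left_mono) auto
  ultimately show ?thesis using cost_le_children[OF F'] by (simp add: algebra_simps)
qed

lemma finite_comps_r: "finite (comps E (U - {r}))"
  using finite_comps finite_U by simp

lemma finite_F: "finite F"
  using finite_subset[OF F_subset finite_comps_r] .

lemma F_disjoint_Qs: "F \<inter> Qs = {}"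
  using F_subset unfolding Qs_def by blast

lemma bound_if_B0_in_F:
  assumes B0F: "B0 \<in> F" and e: "card (comps E (U - {r}) - F) \<le> e" "e \<le> D"
  shows "cost w (Node c cs) \<le> budget U r F e"
proof -
  define F' where "F' = (F - {B0}) \<union> Qs"
  have F': "F' \<subseteq> comps E (U' - {r})" unfolding F'_def comps_without_r using F_subset by blast
  have "comps E (U' - {r}) - F' \<subseteq> comps E (U - {r}) - F"
    unfolding F'_def comps_without_r using B0F by blast
  then have card': "card (comps E (U' - {r}) - F') \<le> e"
    using card_mono[OF finite_Diff[OF finite_comps_r]] e(1) order_trans by blast
  have P0: "\<forall>P\<in>Qs \<union> Rs. \<rho> \<in> P \<longrightarrow> P \<subseteq> B0" using Qs_subset_B0 Rs_subset_B0 by blast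
  have "(\<Sum>B\<in>F'. sum w B) = (\<Sum>B\<in>F - {B0}. sum w B) + (\<Sum>Q\<in>Qs. sum w Q)"
    unfolding F'_def using F_disjoint_Qs
    by (intro sum.union_disjoint finite_Diff finite_F finite_Qs finite_U) blast
  moreover have "(\<Sum>B\<in>F. sum w B) = sum w B0 + (\<Sum>B\<in>F - {B0}. sum w B)"
    using sum.remove[OF finite_F B0F] .
  ultimately have Y: "(\<Sum>B\<in>F'. sum w B) - sum w (B0 - B0) \<le> (\<Sum>B\<in>F. sum w B) - (sum w U - sum w U')"
    using weight_U weight_B0 by simp
  show ?thesis unfolding budget_def
    using cost_le_recursive[OF F' card' e(2) P0]
      ratio_bound_step[where e = e, OF weight_U'_half sum_weight_nonneg[OF U_subset_V] Y]
    by linarith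
qed

lemma bound_if_top_in_Qs:
  assumes B0F: "B0 \<notin> F" and Q0: "Q0 \<in> Qs" "\<rho> \<in> Q0"
    and e: "card (comps E (U - {r}) - F) \<le> e" "e \<le> D"
  shows "cost w (Node c cs) \<le> budget U r F e"
proof -
  define F' where "F' = F \<union> (Qs - {Q0})"
  have finQs: "finite Qs" using finite_Qs[OF finite_U] .
  have F': "F' \<subseteq> comps E (U' - {r})" unfolding F'_def comps_without_r using F_subset B0F by blast
  have "comps E (U' - {r}) - F' \<subseteq> insert Q0 ((comps E (U - {r}) - F) - {B0})"
    unfolding F'_def comps_without_r by blast
  then have "card (comps E (U' - {r}) - F') \<le> card (insert Q0 ((comps E (U - {r}) - F) - {B0}))"
    by (intro card_mono finite_insert[THEN iffD2] finite_Diff finite_comps_r)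
  also have "\<dots> \<le> Suc (card ((comps E (U - {r}) - F) - {B0}))"
    using finite_comps_r by (simp add: card_insert_if)
  also have "\<dots> = card (comps E (U - {r}) - F)"
    using B0 B0F by (intro card_Suc_Diff1 finite_Diff finite_comps_r) blast
  finally have card': "card (comps E (U' - {r}) - F') \<le> e" using e(1) by linarith
  have P0: "\<forall>P\<in>Qs \<union> Rs. \<rho> \<in> P \<longrightarrow> P \<subseteq> Q0"
    using pairwise_disjnt_Qs_Rs Q0 unfolding pairwise_def disjnt_def by blast
  have "(\<Sum>B\<in>F'. sum w B) = (\<Sum>B\<in>F. sum w B) + (\<Sum>Q\<in>Qs - {Q0}. sum w Q)"
    unfolding F'_def using F_disjoint_Qs
    by (intro sum.union_disjoint finite_F finite_Diff finQs) blast
  moreover have "(\<Sum>Q\<in>Qs. sum w Q) = sum w Q0 + (\<Sum>Q\<in>Qs - {Q0}. sum w Q)"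
    using sum.remove[OF finQs Q0(1)] .
  moreover have "sum w (B0 - Q0) = sum w B0 - sum w Q0"
    using sum_diff[OF finite_if_subset_V[OF B0_subset_V]] Qs_subset_B0[OF Q0(1)] by blast
  ultimately have Y: "(\<Sum>B\<in>F'. sum w B) - sum w (B0 - Q0) \<le> (\<Sum>B\<in>F. sum w B) - (sum w U - sum w U')"
    using weight_U weight_B0 by simp
  show ?thesis unfolding budget_def
    using cost_le_recursive[OF F' card' e(2) P0]
      ratio_bound_step[where e = e, OF weight_U'_half sum_weight_nonneg[OF U_subset_V] Y]
    by linarith
qed

lemma bound_if_top_not_in_Qs:
  assumes B0F: "B0 \<notin> F" and top: "\<rho> \<notin> \<Union>Qs"
    and e: "card (comps E (U - {r}) - F) \<le> e" "e \<le> D"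
  shows "cost w (Node c cs) \<le> budget U r F e"
proof -
  define F' where "F' = F \<union> Qs"
  have B0_left: "B0 \<in> comps E (U - {r}) - F" using B0 B0F by blast
  then have "0 < card (comps E (U - {r}) - F)" using finite_comps_r by (auto simp: card_gt_0_iff)
  then obtain e' where e': "e = Suc e'" using e(1) by (cases e) auto
  have F': "F' \<subseteq> comps E (U' - {r})" unfolding F'_def comps_without_r using F_subset B0F by blast
  have "comps E (U' - {r}) - F' \<subseteq> (comps E (U - {r}) - F) - {B0}"
    unfolding F'_def comps_without_r by blast
  then have "card (comps E (U' - {r}) - F') \<le> card ((comps E (U - {r}) - F) - {B0})"
    by (intro card_mono finite_Diff finite_comps_r)
  also have "\<dots> = card (comps E (U - {r}) - F) - 1"
    using B0_left by (intro card_Diff_singleton finite_Diff finite_comps_r)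
  finally have card': "card (comps E (U' - {r}) - F') \<le> e'" using e(1) e' by linarith
  have P0: "\<forall>P\<in>Qs \<union> Rs. \<rho> \<in> P \<longrightarrow> P \<subseteq> B0 - \<Union>Qs"
    using top Rs_subset_B0 pairwise_disjnt_Qs_Rs Qs_Rs_disjoint
    unfolding pairwise_def disjnt_def by blast
  have "(\<Sum>B\<in>F'. sum w B) = (\<Sum>B\<in>F. sum w B) + (\<Sum>Q\<in>Qs. sum w Q)"
    unfolding F'_def using F_disjoint_Qs by (intro sum.union_disjoint finite_F finite_Qs finite_U)
  moreover have "B0 - (B0 - \<Union>Qs) = \<Union>Qs" using Qs_subset_B0 by blast
  moreover have "sum w (\<Union>Qs) = (\<Sum>Q\<in>Qs. sum w Q)"
  proof (rule sum_Union_pairwise_disjnt)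
    show "pairwise disjnt Qs" using pairwise_disjnt_Qs_Rs by (rule pairwise_subset) blast
    show "finite Q" if "Q \<in> Qs" for Q using finite_if_subset_V Qs_Rs_subset_V that by blast
  qed
  ultimately have Y: "(\<Sum>B\<in>F'. sum w B) - sum w (B0 - (B0 - \<Union>Qs)) \<le> (\<Sum>B\<in>F. sum w B)" by simp
  have "e' \<le> D" using e(2) e' by simp
  then show ?thesis unfolding budget_def
    using cost_le_recursive[OF F' card' _ P0] ratio_bound_Suc_step[where e = e', OF weight_U'_half
        sum_weight_comps_nonneg[OF U_subset_V F_subset] Y]
    unfolding e' by linarith
qed

end

context reference_tree
begin

lemma rooted_bound_off_root:
  assumes UV: "U \<subseteq> V" and conn: "graph_connected E U" and r: "r \<in> U"
    and F: "F \<subseteq> comps E (U - {r})" and e: "card (comps E (U - {r}) - F) \<le> e" "e \<le> D"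
    and C: "centroid_tree U E w (Node c cs)" and c_neq_r: "c \<noteq> r"
    and IH: "\<And>K. K \<in> comps E (U - {c}) \<Longrightarrow> rooted_bound K \<and> centroid_bound K"
  shows "cost w (Node c cs) \<le> budget U r F e"
proof -
  have c: "c \<in> U" using centroid_tree_NodeD(1)[OF C] .
  obtain B0 where B0: "B0 \<in> comps E (U - {r})" "c \<in> B0"
    using comps_cover[of c "U - {r}"] c c_neq_r by blast
  obtain U' where U': "U' \<in> comps E (U - {c})" "r \<in> U'"
    using comps_cover[of r "U - {c}"] r c_neq_r by blast
  have "B0 \<subseteq> V" using comps_subset[OF B0(1)] UV by blast
  then obtain \<rho> where \<rho>: "\<rho> \<in> B0" "\<forall>x\<in>B0. \<rho> \<in> ancestors T x"
    using connected_common_ancestor[OF search_tree_T comps_connected[OF B0(1)] _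
        comps_nonempty[OF B0(1)]] by blast
  interpret step: centroid_step E V w T D U r c B0 U' cs F \<rho>
    by unfold_locales
      (use sym finite_V nonneg search_tree_T degree_le UV conn r c c_neq_r B0 U' \<rho> C F IH in auto)
  consider "B0 \<in> F" | Q0 where "B0 \<notin> F" "Q0 \<in> step.Qs" "\<rho> \<in> Q0" | "B0 \<notin> F" "\<rho> \<notin> \<Union>step.Qs"
    by blast
  then show ?thesis
    using step.bound_if_B0_in_F step.bound_if_top_in_Qs step.bound_if_top_not_in_Qs e
    by cases blast+
qed

lemma rooted_bound_step:
  assumes UV: "U \<subseteq> V" and conn: "graph_connected E U"
    and IH: "\<And>K. K \<subseteq> V \<Longrightarrow> graph_connected E K \<Longrightarrow> K \<noteq> {} \<Longrightarrow> card K < card U \<Longrightarrow>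
      rooted_bound K \<and> centroid_bound K"
  shows "rooted_bound U"
  unfolding rooted_bound_def
proof (intro allI impI)
  fix r F e C
  assume r: "r \<in> U" and F: "F \<subseteq> comps E (U - {r})"
    and e: "card (comps E (U - {r}) - F) \<le> e" "e \<le> D" and C: "centroid_tree U E w C"
  obtain c cs where C_eq: "C = Node c cs" by (cases C)
  note C' = C[unfolded C_eq]
  have c: "c \<in> U" using centroid_tree_NodeD(1)[OF C'] .
  have IH_c: "rooted_bound K \<and> centroid_bound K" if K: "K \<in> comps E (U - {c})" for K
  proof (rule IH)
    show "card K < card U"
      using psubset_card_mono[OF finite_if_subset_V[OF UV]] comps_subset[OF K] c by blast
  qed (use comps_subset[OF K] UV comps_connected[OF K] comps_nonempty[OF K] in auto)
  show "cost w C \<le> budget U r F e"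
  proof (cases "c = r")
    case True
    then show ?thesis
      unfolding C_eq True using rooted_bound_at_root[OF UV C'[unfolded True] F] IH_c True
      by blast
  next
    case False
    then show ?thesis
      unfolding C_eq using rooted_bound_off_root[OF UV conn r F e C' _ IH_c] by blast
  qed
qed

lemma rooted_and_centroid_bound:
  "U \<subseteq> V \<Longrightarrow> graph_connected E U \<Longrightarrow> U \<noteq> {} \<Longrightarrow> rooted_bound U \<and> centroid_bound U"
proof (induction "card U" arbitrary: U rule: less_induct)
  case less
  then have "rooted_bound U" using rooted_bound_step[of U] by blast
  then show ?case using centroid_bound_if_rooted_bound less.prems by blast
qed

theorem centroid_tree_cost_le:
  assumes "graph_connected E V" "V \<noteq> {}" "centroid_tree V E w C"
  shows "cost w C \<le> ratio D * cost w T"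
  using centroid_boundD[OF conjunct2[OF rooted_and_centroid_bound[OF subset_refl assms(1,2)]] assms(3)]
  unfolding proj_cost_V .

end

lemma degree_le_max_degree: "finite V \<Longrightarrow> v \<in> V \<Longrightarrow> card {u \<in> V. E v u} \<le> max_degree V E"
  unfolding max_degree_def by (intro Max_ge) auto

context tree
begin

lemma OPT_attained:
  fixes w :: "'a \<Rightarrow> real"
  assumes "\<forall>x\<in>V. 0 \<le> w x"
  shows "\<exists>T. search_tree E V T \<and> OPT V E w = cost w T"
proof -
  obtain C where "centroid_tree V E w C"
    using centroid_tree_exists[OF subset_refl connected_V _ assms] is_tree
    unfolding is_tree_def by blast
  then have "{T. search_tree E V T} \<noteq> {}" unfolding centroid_tree_def by blast
  then have "OPT V E w \<in> cost w ` {T. search_tree E V T}"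
    unfolding OPT_def using finite_search_trees[OF finite_V] by (intro Min_in) auto
  then show ?thesis by blast
qed

lemma cent_attained:
  fixes w :: "'a \<Rightarrow> real"
  assumes "\<forall>x\<in>V. 0 \<le> w x"
  shows "\<exists>C. centroid_tree V E w C \<and> cent V E w = cost w C"
proof -
  obtain C where "centroid_tree V E w C"
    using centroid_tree_exists[OF subset_refl connected_V _ assms] is_tree
    unfolding is_tree_def by blast
  moreover have "finite {C. centroid_tree V E w C}"
    using finite_search_trees[OF finite_V]
    by (rule finite_subset[rotated]) (auto simp: centroid_tree_def)
  ultimately have "cent V E w \<in> cost w ` {C. centroid_tree V E w C}"
    unfolding cent_def by (intro Max_in) auto
  then show ?thesis by blast
qed

end

theorem theorem4:
  fixes V :: "'a set" and E :: "'a \<Rightarrow> 'a \<Rightarrow> bool" and w :: "'a \<Rightarrow> real"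
  assumes "is_tree V E"
    and "\<forall>v\<in>V. w v \<ge> 0"
  shows "cent V E w \<le> (2 - 1 / 2 ^ max_degree V E) * OPT V E w"
proof -
  interpret tree V E using assms(1) by unfold_locales
  obtain C where C: "centroid_tree V E w C" "cent V E w = cost w C"
    using cent_attained[OF assms(2)] by blast
  obtain T where T: "search_tree E V T" "OPT V E w = cost w T"
    using OPT_attained[OF assms(2)] by blast
  interpret reference_tree E V w T "max_degree V E"
    using finite_V assms(2) T(1) degree_le_max_degree[OF finite_V] by unfold_locales auto
  have "V \<noteq> {}" using assms(1) unfolding is_tree_def by blast
  then show ?thesis
    using centroid_tree_cost_le[OF connected_V _ C(1)] C(2) T(2) unfolding ratio_def by simp
qed

end
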